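(* Let $\kappa>0$ and $0<t_0<1/\kappa^2$. Let ${\mathbf x}_{t_0}\sim p_{t_0}$ and let $\hat p_0$ denote the law of $\phi_{0|t_0}({\mathbf x}_{t_0})$ (the time-$0$ outcome of running $\frac{d}{dt}{\mathbf x}_t=-\frac12\hat s_{t,\kappa\sqrt t}({\mathbf x}_t)$ backward from $t_0$). Then $$\mathrm{KL}(u_1\,\|\,\hat p_0)\le\frac{1}{3t_0(1-\kappa\sqrt{t_0})}+\log\Big(\frac{\sqrt{t_0}}{1-\kappa\sqrt{t_0}}\Big)+\log(2\sqrt{2\pi})<\infty.$$
   Context: $p_{\mathcal N}(x;\sigma)=(\sqrt{2\pi}\sigma)^{-1}e^{-x^2/(2\sigma^2)}$; $p_t(x)=\frac12(p_{\mathcal N}(x+1;\sqrt t)+p_{\mathcal N}(x-1;\sqrt t))$. Smoothed PL-ESF: $\hat s_{t,\delta}(x)=-(x+1)/t$ if $x\le\delta-1$; $-(x-1)/t$ if $x\ge1-\delta$; $\frac{\delta}{1-\delta}\frac xt$ otherwise. $\phi_{0|t}(x)=x/(1-\kappa\sqrt t)$ if $|x|\le1-\kappa\sqrt t$, and $\mathrm{sgn}(x)$ otherwise. $u_1$ is the uniform distribution on $[-1,1]$; $\mathrm{KL}(P\|Q)=\int\log\frac{dP}{dQ}dP$ if $P\ll Q$, else $+\infty$. *)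

theory Defs
  imports "HOL-Probability.Probability"
begin

definition pN :: "real \<Rightarrow> real \<Rightarrow> real" where
  "pN x \<sigma> = exp (- (x^2) / (2 * \<sigma>^2)) / (sqrt (2 * pi) * \<sigma>)"

definition p_t :: "real \<Rightarrow> real \<Rightarrow> real" where
  "p_t t x = (pN (x + 1) (sqrt t) + pN (x - 1) (sqrt t)) / 2"

text \<open>Smoothed PL-ESF (only used to motivate the flow map; stated for reference).\<close>
definition s_hat :: "real \<Rightarrow> real \<Rightarrow> real \<Rightarrow> real" where
  "s_hat t \<delta> x = (if x \<le> \<delta> - 1 then - (x + 1) / t
                   else if x \<ge> 1 - \<delta> then - (x - 1) / t
                   else \<delta> / (1 - \<delta>) * x / t)"

definition phi0 :: "real \<Rightarrow> real \<Rightarrow> real \<Rightarrow> real" where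
  "phi0 \<kappa> t x = (if \<bar>x\<bar> \<le> 1 - \<kappa> * sqrt t then x / (1 - \<kappa> * sqrt t) else sgn x)"

definition law_p :: "real \<Rightarrow> real measure" where
  "law_p t = density lborel (\<lambda>x. ennreal (p_t t x))"

definition p_hat0 :: "real \<Rightarrow> real \<Rightarrow> real measure" where
  "p_hat0 \<kappa> t0 = distr (law_p t0) borel (phi0 \<kappa> t0)"

definition u1 :: "real measure" where
  "u1 = uniform_measure lborel {-1..1}"

definition KL :: "real measure \<Rightarrow> real measure \<Rightarrow> ereal" where
  "KL P Q = (if sets P = sets Q \<and> absolutely_continuous Q P then
      enn2ereal (\<integral>\<^sup>+ x. ennreal (ln (enn2real (RN_deriv Q P x))) \<partial>P)
      - enn2ereal (\<integral>\<^sup>+ x. ennreal (- ln (enn2real (RN_deriv Q P x))) \<partial>P)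
    else \<infinity>)"

end

theory Submission
  imports Defs
begin

text \<open>With \<open>c = 1 - \<kappa> sqrt t\<^sub>0\<close>, the flow map sends \<open>(-c, c)\<close> linearly onto \<open>(-1, 1)\<close> and
  everything else to \<open>\<plusminus>1\<close>. Hence \<open>u\<^sub>1\<close> has the density \<open>y \<mapsto> 1 / (2 c p\<^sub>t\<^sub>0(c y))\<close> on \<open>(-1, 1)\<close>
  with respect to \<open>p_hat0\<close>, and the KL divergence is the \<open>u\<^sub>1\<close>-mean of its logarithm. Bounding
  \<open>p\<^sub>t\<^sub>0(x)\<close> from below by half the Gaussian bump centred at the nearer of \<open>\<plusminus>1\<close>, and using
  \<open>(1 - \<bar>x\<bar>)\<^sup>2 \<le> 1 - c y\<^sup>2\<close> for \<open>x = c y\<close>, bounds the logarithm by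
  \<open>ln (sqrt (2 \<pi> t\<^sub>0) / c) + (1 - c y\<^sup>2) / (2 t\<^sub>0)\<close>, whose \<open>u\<^sub>1\<close>-mean is below the claimed bound.\<close>

lemma sets_u1 [simp]: "sets u1 = sets borel"
  unfolding u1_def by simp

lemma prob_space_u1: "prob_space u1"
  unfolding u1_def by (rule prob_space_uniform_measure) auto

lemma u1_eq_density: "u1 = density lborel (\<lambda>y. ennreal (indicator {-1..1} y / 2))"
proof -
  have "u1 = density lborel (\<lambda>x. indicator {-1..1::real} x / emeasure lborel {-1..1::real})"
    unfolding u1_def uniform_measure_def ..
  also have "\<dots> = density lborel (\<lambda>y. ennreal (indicator {-1..1} y / 2))"
    by (intro density_cong AE_I2) (auto simp: indicator_def divide_ennreal[symmetric] ennreal_numeral)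
  finally show ?thesis .
qed

lemma u1_eq_density_open: "u1 = density lborel (\<lambda>y. ennreal (indicator {-1<..<1} y / 2))"
  unfolding u1_eq_density
proof (rule density_cong)
  show "AE y in lborel. ennreal (indicator {-1..1::real} y / 2) = ennreal (indicator {-1<..<1} y / 2)"
    using AE_lborel_singleton[of "1::real"] AE_lborel_singleton[of "-1::real"]
  proof eventually_elim
    case (elim y)
    then show ?case by (auto simp: indicator_def)
  qed
qed auto

lemma integral_u1_FTC:
  fixes f F :: "real \<Rightarrow> real"
  assumes f: "continuous_on UNIV f"
    and F: "\<And>x. (F has_real_derivative f x) (at x)"
  shows "integrable u1 f" and "integral\<^sup>L u1 f = (F 1 - F (-1)) / 2"
proof -
  let ?g = "\<lambda>y::real. indicator {-1..1} y / (2::real)"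
  have fm: "f \<in> borel_measurable lborel"
    using f by (simp add: borel_measurable_continuous_onI)
  have g_nonneg: "AE x in lborel. 0 \<le> ?g x" by (auto simp: indicator_def)
  have weighted: "(\<lambda>x. ?g x *\<^sub>R f x) = (\<lambda>x. 1/2 * (indicator {-1..1} x *\<^sub>R f x))"
    by (auto simp: fun_eq_iff indicator_def)
  have f_Icc: "continuous_on {-1..1} f"
    using f by (rule continuous_on_subset) simp
  have "integrable lborel (\<lambda>x. indicator {-1..1} x *\<^sub>R f x)"
    using borel_integrable_atLeastAtMost'[OF f_Icc] by (simp add: set_integrable_def)
  then show "integrable u1 f"
    unfolding u1_eq_density using integrable_density[OF fm _ g_nonneg] weighted by simp
  have "integral\<^sup>L lborel (\<lambda>x. indicator {-1..1} x *\<^sub>R f x) = F 1 - F (-1)"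
    using F f_Icc
    by (intro integral_FTC_atLeastAtMost)
       (auto simp: has_real_derivative_iff_has_vector_derivative[symmetric]
             intro: DERIV_subset)
  then show "integral\<^sup>L u1 f = (F 1 - F (-1)) / 2"
    unfolding u1_eq_density using integral_density[OF fm _ g_nonneg] weighted by simp
qed

lemma pN_pos: "s > 0 \<Longrightarrow> pN x s > 0"
  unfolding pN_def by auto

lemma pN_le: "s > 0 \<Longrightarrow> pN x s \<le> 1 / (sqrt (2 * pi) * s)"
  unfolding pN_def by (intro divide_right_mono) auto

lemma p_t_pos: "t > 0 \<Longrightarrow> p_t t x > 0"
  unfolding p_t_def using pN_pos[of "sqrt t"] by (simp add: add_pos_pos)

lemma p_t_le: "t > 0 \<Longrightarrow> p_t t x \<le> 1 / (sqrt (2 * pi) * sqrt t)"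
  unfolding p_t_def using pN_le[of "sqrt t" "x + 1"] pN_le[of "sqrt t" "x - 1"] by simp

lemma p_t_ge:
  assumes t: "0 < t"
  shows "exp (- ((1 - \<bar>x\<bar>)^2) / (2 * t)) / (2 * (sqrt (2 * pi) * sqrt t)) \<le> p_t t x"
proof -
  have pN_eq: "pN y (sqrt t) = exp (- ((1 - \<bar>x\<bar>)^2) / (2 * t)) / (sqrt (2 * pi) * sqrt t)"
    if "y^2 = (1 - \<bar>x\<bar>)^2" for y
    unfolding pN_def using that t by simp
  have "(x - 1)^2 = (1 - \<bar>x\<bar>)^2 \<or> (x + 1)^2 = (1 - \<bar>x\<bar>)^2"
    by (cases "x \<ge> 0") (auto simp: power2_commute add.commute)
  moreover have "pN (x + 1) (sqrt t) \<ge> 0" "pN (x - 1) (sqrt t) \<ge> 0"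
    using pN_pos[of "sqrt t"] t by (auto intro: less_imp_le)
  ultimately show ?thesis
    unfolding p_t_def using pN_eq by auto
qed

lemma p_t_measurable [measurable]: "p_t t \<in> borel_measurable borel"
  unfolding p_t_def pN_def by measurable

lemma phi0_measurable [measurable]: "phi0 \<kappa> t \<in> borel_measurable borel"
  unfolding phi0_def by measurable

lemma distr_uniform_scale:
  fixes c :: real and h :: "real \<Rightarrow> real"
  assumes c: "0 < c"
    and h[measurable]: "h \<in> borel_measurable borel"
    and h_scale: "\<And>x. \<bar>x\<bar> < c \<Longrightarrow> h x = x / c"
  shows "distr (density lborel (\<lambda>x. ennreal (indicator {-c<..<c} x / (2 * c)))) borel h
         = density lborel (\<lambda>y. ennreal (indicator {-1<..<1} y / 2))"
proof (rule measure_eqI)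
  let ?D = "density lborel (\<lambda>x. ennreal (indicator {-c<..<c} x / (2 * c)))"
  fix A :: "real set"
  assume "A \<in> sets (distr ?D borel h)"
  then have A[measurable]: "A \<in> sets borel" by simp
  have in_interval: "(-c < c * x \<and> c * x < c) \<longleftrightarrow> (-1 < x \<and> x < 1)" for x
    using c by (metis mult.right_neutral mult_less_cancel_left_pos mult_minus_right)
  have "emeasure (distr ?D borel h) A
      = (\<integral>\<^sup>+x. ennreal (indicator {-c<..<c} x / (2 * c)) * indicator A (h x) \<partial>lborel)"
  proof -
    have hA: "h -` A \<in> sets lborel"
      using measurable_sets[OF h A] by simp
    have "emeasure (distr ?D borel h) A = emeasure ?D (h -` A)"
      by (subst emeasure_distr) simp_all
    also have "\<dots> = (\<integral>\<^sup>+x. ennreal (indicator {-c<..<c} x / (2 * c)) * indicator (h -` A) x \<partial>lborel)"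
      by (rule emeasure_density[OF _ hA]) measurable
    finally show ?thesis
      by (simp only: indicator_vimage)
  qed
  also have "\<dots> = (\<integral>\<^sup>+x. ennreal (indicator {-c<..<c} x / (2 * c)) * indicator A (x / c) \<partial>lborel)"
    using h_scale by (intro nn_integral_cong) (auto split: split_indicator)
  also have "\<dots> = ennreal c * (\<integral>\<^sup>+x. ennreal (indicator {-c<..<c} (0 + c * x) / (2 * c))
                                   * indicator A ((0 + c * x) / c) \<partial>lborel)"
    using c by (subst nn_integral_real_affine[where c = c and t = 0]) auto
  also have "\<dots> = (\<integral>\<^sup>+x. ennreal c * (ennreal (indicator {-c<..<c} (0 + c * x) / (2 * c))
                                   * indicator A ((0 + c * x) / c)) \<partial>lborel)"
    by (rule nn_integral_cmult[symmetric]) auto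
  also have "\<dots> = (\<integral>\<^sup>+x. ennreal (indicator {-1<..<1} x / 2) * indicator A x \<partial>lborel)"
  proof (rule nn_integral_cong)
    fix x :: real
    show "ennreal c * (ennreal (indicator {-c<..<c} (0 + c * x) / (2 * c)) * indicator A ((0 + c * x) / c))
        = ennreal (indicator {-1<..<1} x / 2) * indicator A x"
      using c in_interval[of x] by (auto simp: indicator_def ennreal_mult[symmetric])
  qed
  also have "\<dots> = emeasure (density lborel (\<lambda>y. ennreal (indicator {-1<..<1} y / 2))) A"
    by (simp add: emeasure_density)
  finally show "emeasure (distr ?D borel h) A
      = emeasure (density lborel (\<lambda>y. ennreal (indicator {-1<..<1} y / 2))) A" .
qed simp

definition dens_u1_p_hat0 :: "real \<Rightarrow> real \<Rightarrow> real \<Rightarrow> real" where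
  "dens_u1_p_hat0 c t y = (if -1 < y \<and> y < 1 then 1 / (2 * c * p_t t (c * y)) else 0)"

lemma dens_u1_p_hat0_measurable [measurable]: "dens_u1_p_hat0 c t \<in> borel_measurable borel"
  unfolding dens_u1_p_hat0_def by measurable

lemma dens_u1_p_hat0_nonneg: "0 < c \<Longrightarrow> 0 < t \<Longrightarrow> 0 \<le> dens_u1_p_hat0 c t y"
  unfolding dens_u1_p_hat0_def using p_t_pos[of t "c * y"] by simp

lemma u1_eq_density_p_hat0:
  fixes \<kappa> t :: real
  defines "c \<equiv> 1 - \<kappa> * sqrt t"
  assumes c: "0 < c" and t: "0 < t"
  shows "u1 = density (p_hat0 \<kappa> t) (\<lambda>y. ennreal (dens_u1_p_hat0 c t y))"
proof -
  have phi0_measurable_law_p: "phi0 \<kappa> t \<in> measurable (law_p t) borel"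
    unfolding law_p_def by (simp add: measurable_cong_sets[OF sets_density refl])
  have "density (p_hat0 \<kappa> t) (\<lambda>y. ennreal (dens_u1_p_hat0 c t y))
      = distr (density (law_p t) (\<lambda>x. ennreal (dens_u1_p_hat0 c t (phi0 \<kappa> t x)))) borel (phi0 \<kappa> t)"
    unfolding p_hat0_def by (rule density_distr[OF _ phi0_measurable_law_p]) measurable
  also have "density (law_p t) (\<lambda>x. ennreal (dens_u1_p_hat0 c t (phi0 \<kappa> t x)))
      = density lborel (\<lambda>x. ennreal (p_t t x) * ennreal (dens_u1_p_hat0 c t (phi0 \<kappa> t x)))"
    unfolding law_p_def by (rule density_density_eq) measurable
  also have "\<dots> = density lborel (\<lambda>x. ennreal (indicator {-c<..<c} x / (2 * c)))"
  proof (intro density_cong AE_I2)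
    fix x :: real
    have "p_t t x * dens_u1_p_hat0 c t (phi0 \<kappa> t x) = indicator {-c<..<c} x / (2 * c)"
    proof (cases "\<bar>x\<bar> < c")
      case True
      then have "phi0 \<kappa> t x = x / c" "-1 < x / c" "x / c < 1"
        using c by (auto simp: phi0_def c_def field_simps abs_less_iff)
      then show ?thesis
        using True c p_t_pos[OF t, of x] by (auto simp: dens_u1_p_hat0_def indicator_def abs_less_iff)
    next
      case False
      then have "\<bar>phi0 \<kappa> t x\<bar> = 1"
        using c by (auto simp: phi0_def c_def sgn_real_def)
      then show ?thesis
        using False by (auto simp: dens_u1_p_hat0_def indicator_def abs_less_iff)
    qed
    then show "ennreal (p_t t x) * ennreal (dens_u1_p_hat0 c t (phi0 \<kappa> t x))
             = ennreal (indicator {-c<..<c} x / (2 * c))"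
      using p_t_pos[OF t, of x] dens_u1_p_hat0_nonneg[OF c t] by (simp add: ennreal_mult[symmetric])
  qed measurable
  also have "distr \<dots> borel (phi0 \<kappa> t) = u1"
    unfolding u1_eq_density_open
    by (rule distr_uniform_scale[OF c]) (auto simp: phi0_def c_def)
  finally show ?thesis ..
qed

lemma KL_density_eq_integral_ln:
  fixes P Q :: "real measure" and g :: "real \<Rightarrow> real"
  assumes P: "P = density Q (\<lambda>y. ennreal (g y))" and "sigma_finite_measure P"
    and g[measurable]: "g \<in> borel_measurable Q" and g_nonneg: "\<And>y. 0 \<le> g y"
    and ln_g: "integrable P (\<lambda>y. ln (g y))"
  shows "KL P Q = ereal (\<integral>y. ln (g y) \<partial>P)"
proof -
  have "AE y in Q. ennreal (g y) = RN_deriv Q P y"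
    using P \<open>sigma_finite_measure P\<close> by (intro RN_deriv_unique_sigma_finite) simp_all
  then have "AE y in P. ennreal (g y) = RN_deriv Q P y"
    unfolding P by (subst AE_density) (auto elim: AE_mp)
  then have RN_eq: "AE y in P. enn2real (RN_deriv Q P y) = g y"
    by eventually_elim (metis enn2real_ennreal g_nonneg)
  have Q_dominates: "sets P = sets Q" "absolutely_continuous Q P"
    unfolding P by (simp_all add: absolutely_continuousI_density)
  have "KL P Q = enn2ereal (\<integral>\<^sup>+ y. ennreal (ln (g y)) \<partial>P)
                      - enn2ereal (\<integral>\<^sup>+ y. ennreal (- ln (g y)) \<partial>P)"
  proof -
    have "(\<integral>\<^sup>+ y. ennreal (f (enn2real (RN_deriv Q P y))) \<partial>P) = (\<integral>\<^sup>+ y. ennreal (f (g y)) \<partial>P)"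
      for f :: "real \<Rightarrow> real"
      using RN_eq by (intro nn_integral_cong_AE) (auto elim: AE_mp)
    from this[of ln] this[of "\<lambda>r. - ln r"] show ?thesis
      unfolding KL_def using Q_dominates by simp
  qed
  also have "\<dots> = ereal (enn2real (\<integral>\<^sup>+ y. ennreal (ln (g y)) \<partial>P)
                         - enn2real (\<integral>\<^sup>+ y. ennreal (- ln (g y)) \<partial>P))"
  proof -
    have "enn2ereal X = ereal (enn2real X)" if "X \<noteq> \<infinity>" for X :: ennreal
      using that by (cases X rule: ennreal_cases) auto
    then show ?thesis
      using ln_g unfolding real_integrable_def by simp
  qed
  also have "\<dots> = ereal (\<integral>y. ln (g y) \<partial>P)"
    using real_lebesgue_integral_def[OF ln_g] by simp
  finally show ?thesis .
qed

lemma ln_dens_u1_p_hat0_ge: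
  assumes c: "0 < c" and t: "0 < t" and y: "-1 < y" "y < 1"
  shows "ln (sqrt (2 * pi) * sqrt t / (2 * c)) \<le> ln (dens_u1_p_hat0 c t y)"
proof -
  have "sqrt (2 * pi) * sqrt t / (2 * c) \<le> 1 / (2 * c * p_t t (c * y))"
    using p_t_le[OF t, of "c * y"] p_t_pos[OF t, of "c * y"] c t by (simp add: field_simps)
  then show ?thesis
    using y c t p_t_pos[OF t, of "c * y"] by (simp add: dens_u1_p_hat0_def del: divide_le_0_iff)
qed

lemma one_minus_abs_scaled_sq_le:
  fixes c y :: real
  assumes c: "0 \<le> c" "c \<le> 1" and y: "\<bar>y\<bar> \<le> 1"
  shows "(1 - \<bar>c * y\<bar>)^2 \<le> 1 - c * y^2"
proof -
  have cy: "0 \<le> \<bar>c * y\<bar>" "\<bar>c * y\<bar> \<le> 1"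
    using c y by (auto simp: abs_mult intro: mult_le_one)
  have "y^2 \<le> \<bar>y\<bar>"
    using y mult_left_le_one_le[of "\<bar>y\<bar>" "\<bar>y\<bar>"] by (simp add: power2_eq_square)
  then have "c * y^2 \<le> \<bar>c * y\<bar>"
    using c by (simp add: abs_mult mult_left_mono)
  moreover have "(1 - \<bar>c * y\<bar>)^2 \<le> 1 - \<bar>c * y\<bar>"
    using cy by (simp add: power2_eq_square mult_left_le_one_le)
  ultimately show ?thesis by simp
qed

lemma ln_dens_u1_p_hat0_le:
  assumes c: "0 < c" "c \<le> 1" and t: "0 < t" and y: "-1 < y" "y < 1"
  shows "ln (dens_u1_p_hat0 c t y) \<le> ln (sqrt (2 * pi) * sqrt t / c) + (1 - c * y^2) / (2 * t)"
proof -
  let ?S = "sqrt (2 * pi) * sqrt t" and ?d = "(1 - \<bar>c * y\<bar>)^2"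
  have S_pos: "0 < ?S" using t by simp
  have p_pos: "0 < p_t t (c * y)" using p_t_pos[OF t] .
  have "ln (dens_u1_p_hat0 c t y) = - ln (2 * c * p_t t (c * y))"
    using y c p_pos by (simp add: dens_u1_p_hat0_def ln_div)
  also have "\<dots> \<le> - ln (c * exp (- ?d / (2 * t)) / ?S)"
  proof -
    have "c * exp (- ?d / (2 * t)) / ?S \<le> 2 * c * p_t t (c * y)"
      using p_t_ge[OF t, of "c * y"] c S_pos by (simp add: field_simps)
    then show ?thesis
      using c S_pos p_pos by (simp add: ln_le_cancel_iff)
  qed
  also have "\<dots> = ln (?S / c) + ?d / (2 * t)"
    using c S_pos by (simp add: ln_div ln_mult)
  also have "?d / (2 * t) \<le> (1 - c * y^2) / (2 * t)"
    using one_minus_abs_scaled_sq_le[of c y] c y t by (simp add: divide_right_mono)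
  finally show ?thesis by simp
qed

lemma AE_u1_open_interval: "AE y in u1. -1 < y \<and> y < 1"
  unfolding u1_eq_density_open by (subst AE_density) (auto simp: indicator_def)

lemma
  assumes c: "0 < c" "c \<le> 1" and t: "0 < t"
  shows integrable_ln_dens_u1_p_hat0: "integrable u1 (\<lambda>y. ln (dens_u1_p_hat0 c t y))"
    and integral_ln_dens_u1_p_hat0_le:
      "(\<integral>y. ln (dens_u1_p_hat0 c t y) \<partial>u1) \<le> ln (sqrt (2 * pi) * sqrt t / c) + (1 - c / 3) / (2 * t)"
proof -
  define K where "K = ln (sqrt (2 * pi) * sqrt t / c)"
  define L where "L = (\<lambda>y::real. K + (1 - c * y^2) / (2 * t))"
  define F where "F = (\<lambda>y::real. K * y + (y - c * y^3 / 3) / (2 * t))"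
  have "continuous_on UNIV L"
    unfolding L_def using t by (intro continuous_intros) auto
  moreover have "(F has_real_derivative L y) (at y)" for y
    unfolding F_def L_def using t by (auto intro!: derivative_eq_intros simp: power2_eq_square field_simps)
  ultimately have L: "integrable u1 L" "integral\<^sup>L u1 L = (F 1 - F (-1)) / 2"
    by (rule integral_u1_FTC)+
  have bounds: "AE y in u1. ln (sqrt (2 * pi) * sqrt t / (2 * c)) \<le> ln (dens_u1_p_hat0 c t y)
                             \<and> ln (dens_u1_p_hat0 c t y) \<le> L y"
    using AE_u1_open_interval
  proof eventually_elim
    case (elim y)
    then show ?case
      using ln_dens_u1_p_hat0_ge[OF c(1) t] ln_dens_u1_p_hat0_le[OF c t] by (simp add: L_def K_def)
  qed
  show integrable: "integrable u1 (\<lambda>y. ln (dens_u1_p_hat0 c t y))"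
  proof (rule Bochner_Integration.integrable_bound)
    show "integrable u1 (\<lambda>y. \<bar>L y\<bar> + \<bar>ln (sqrt (2 * pi) * sqrt t / (2 * c))\<bar>)"
      using L(1) prob_space.finite_measure[OF prob_space_u1]
      by (intro Bochner_Integration.integrable_add integrable_abs finite_measure.integrable_const)
    show "AE y in u1. norm (ln (dens_u1_p_hat0 c t y))
                     \<le> norm (\<bar>L y\<bar> + \<bar>ln (sqrt (2 * pi) * sqrt t / (2 * c))\<bar>)"
      using bounds by eventually_elim auto
  qed (simp add: measurable_cong_sets[OF sets_u1 refl])
  have "(\<integral>y. ln (dens_u1_p_hat0 c t y) \<partial>u1) \<le> integral\<^sup>L u1 L"
    using bounds by (intro integral_mono_AE integrable L(1)) (auto elim: AE_mp)
  also have "\<dots> = K + (1 - c / 3) / (2 * t)"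
    unfolding L(2) F_def using t by (simp add: field_simps)
  finally show "(\<integral>y. ln (dens_u1_p_hat0 c t y) \<partial>u1) \<le> ln (sqrt (2 * pi) * sqrt t / c) + (1 - c / 3) / (2 * t)"
    unfolding K_def .
qed

lemma KL_bound_slack:
  fixes c t :: real
  assumes c: "0 < c" "c \<le> 1" and t: "0 < t"
  shows "ln (sqrt (2 * pi) * sqrt t / c) + (1 - c / 3) / (2 * t)
         \<le> 1 / (3 * t * c) + ln (sqrt t / c) + ln (2 * sqrt (2 * pi))"
proof -
  have "ln (sqrt (2 * pi) * sqrt t / c) = ln (sqrt (2 * pi)) + ln (sqrt t / c)"
    using ln_mult_pos[of "sqrt (2 * pi)" "sqrt t / c"] c t by simp
  moreover have "ln (2 * sqrt (2 * pi)) = ln 2 + ln (sqrt (2 * pi))"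
    by (simp add: ln_mult)
  moreover have "1 / (3 * t * c) - (1 - c / 3) / (2 * t) = (1 - c) * (2 - c) / (6 * t * c)"
    using c t by (simp add: field_simps)
  moreover have "0 \<le> (1 - c) * (2 - c) / (6 * t * c)"
    using c t by simp
  ultimately show ?thesis
    using ln_ge_zero[of 2] by linarith
qed

theorem mainTheorem7:
  fixes \<kappa> t0 :: real
  assumes "\<kappa> > 0" and "0 < t0" and "t0 < 1 / \<kappa>^2"
  shows "KL u1 (p_hat0 \<kappa> t0) \<le>
           ereal (1 / (3 * t0 * (1 - \<kappa> * sqrt t0)) + ln (sqrt t0 / (1 - \<kappa> * sqrt t0))
                  + ln (2 * sqrt (2 * pi)))
         \<and> KL u1 (p_hat0 \<kappa> t0) < \<infinity>"
proof -
  define c where "c = 1 - \<kappa> * sqrt t0"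
  have "sqrt t0 < 1 / \<kappa>"
    using real_sqrt_less_mono[OF assms(3)] assms(1) by (simp add: real_sqrt_divide)
  then have c: "0 < c" "c \<le> 1"
    using assms(1,2) by (auto simp: c_def field_simps)
  have "KL u1 (p_hat0 \<kappa> t0) = ereal (\<integral>y. ln (dens_u1_p_hat0 c t0 y) \<partial>u1)"
  proof (rule KL_density_eq_integral_ln)
    show "u1 = density (p_hat0 \<kappa> t0) (\<lambda>y. ennreal (dens_u1_p_hat0 c t0 y))"
      using u1_eq_density_p_hat0[of \<kappa> t0] c assms(2) by (simp add: c_def)
  qed (use c assms(2) prob_space_u1 in \<open>auto simp: p_hat0_def prob_space_imp_sigma_finite
         dens_u1_p_hat0_nonneg integrable_ln_dens_u1_p_hat0\<close>)
  also have "\<dots> \<le> ereal (ln (sqrt (2 * pi) * sqrt t0 / c) + (1 - c / 3) / (2 * t0))"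
    using integral_ln_dens_u1_p_hat0_le[OF c assms(2)] by simp
  also have "\<dots> \<le> ereal (1 / (3 * t0 * c) + ln (sqrt t0 / c) + ln (2 * sqrt (2 * pi)))"
    using KL_bound_slack[OF c assms(2)] by simp
  finally show ?thesis
    unfolding c_def by auto
qed

end
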